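(* Let $X$ be an FK-space containing $\phi$ such that every weakly convergent sequence in $X$ converges in the FK-topology of $X$. Then, computed in $X$, $D_p^qS=D_p^qW=D_p^qF=D_p^qF^+$.
   Context: An FK-space is a vector subspace of the space $w$ of all complex sequences with a complete metrizable locally convex topology in which coordinate functionals are continuous; $X'$ is its continuous dual. $\delta^j$ has $1$ in position $j$, $0$ elsewhere; $\phi=\operatorname{span}\{\delta^j\}$. $p(n)<q(n)$ are nonnegative integer sequences with $q(n)\to\infty$. For $x\in w$, $x^{(k)}=\sum_{j=1}^kx_j\delta^j$ and $T_n(x)=\frac{1}{q(n)-p(n)}\sum_{k=p(n)+1}^{q(n)}x^{(k)}$. $D_p^qS=\{x\in X: T_n(x)\to x\text{ in }X\}$; $D_p^qW=\{x\in X: f(T_n(x))\to f(x)\ \forall f\in X'\}$; $D_p^qF^+=\{x\in w:\lim_n f(T_n(x))\text{ exists }\forall f\in X'\}$ (i.e. $(T_n(x))$ is weakly Cauchy in $X$); $D_p^qF=D_p^qF^+\cap X$. *)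

theory Defs
  imports "HOL-Analysis.Analysis"
begin

text \<open>Sequences are indexed from 0 (coordinate j of x is x j).\<close>

type_synonym seqc = "nat \<Rightarrow> complex"

definition linear_subspace_w :: "seqc set \<Rightarrow> bool" where
  "linear_subspace_w X \<longleftrightarrow> (\<lambda>j. 0) \<in> X \<and>
     (\<forall>x\<in>X. \<forall>y\<in>X. (\<lambda>j. x j + y j) \<in> X) \<and>
     (\<forall>c::complex. \<forall>x\<in>X. (\<lambda>j. c * x j) \<in> X)"

definition convex_w :: "seqc set \<Rightarrow> bool" where
  "convex_w V \<longleftrightarrow> (\<forall>x\<in>V. \<forall>y\<in>V. \<forall>t::real. 0 \<le> t \<and> t \<le> 1 \<longrightarrow>
      (\<lambda>j. complex_of_real t * x j + complex_of_real (1 - t) * y j) \<in> V)"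

definition FK_space :: "seqc set \<Rightarrow> seqc topology \<Rightarrow> bool" where
  "FK_space X T \<longleftrightarrow> linear_subspace_w X \<and> topspace T = X \<and>
     continuous_map (prod_topology T T) T (\<lambda>(x, y). (\<lambda>j. x j + y j)) \<and>
     continuous_map (prod_topology (euclidean :: complex topology) T) T (\<lambda>(c, x). (\<lambda>j. c * x j)) \<and>
     (\<forall>U x. openin T U \<and> x \<in> U \<longrightarrow> (\<exists>V. openin T V \<and> convex_w V \<and> x \<in> V \<and> V \<subseteq> U)) \<and>
     completely_metrizable_space T \<and>
     (\<forall>j. continuous_map T (euclidean :: complex topology) (\<lambda>x. x j))"

definition phi_space :: "seqc set" where
  "phi_space = {x. finite {j. x j \<noteq> 0}}"

definition dual_FK :: "seqc set \<Rightarrow> seqc topology \<Rightarrow> (seqc \<Rightarrow> complex) set" where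
  "dual_FK X T = {f. (\<forall>x\<in>X. \<forall>y\<in>X. \<forall>a b::complex.
        f (\<lambda>j. a * x j + b * y j) = a * f x + b * f y) \<and>
      continuous_map T (euclidean :: complex topology) f}"

definition section_k :: "nat \<Rightarrow> seqc \<Rightarrow> seqc" where
  "section_k k x = (\<lambda>j. if j < k then x j else 0)"

definition T_mean :: "(nat \<Rightarrow> nat) \<Rightarrow> (nat \<Rightarrow> nat) \<Rightarrow> nat \<Rightarrow> seqc \<Rightarrow> seqc" where
  "T_mean p q n x = (\<lambda>j. (\<Sum>k\<in>{p n<..q n}. section_k k x j) / of_nat (q n - p n))"

definition DS :: "seqc set \<Rightarrow> seqc topology \<Rightarrow> (nat \<Rightarrow> nat) \<Rightarrow> (nat \<Rightarrow> nat) \<Rightarrow> seqc set" where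
  "DS X T p q = {x \<in> X. limitin T (\<lambda>n. T_mean p q n x) x sequentially}"

definition DW :: "seqc set \<Rightarrow> seqc topology \<Rightarrow> (nat \<Rightarrow> nat) \<Rightarrow> (nat \<Rightarrow> nat) \<Rightarrow> seqc set" where
  "DW X T p q = {x \<in> X. \<forall>f \<in> dual_FK X T. (\<lambda>n. f (T_mean p q n x)) \<longlonglongrightarrow> f x}"

definition DFplus :: "seqc set \<Rightarrow> seqc topology \<Rightarrow> (nat \<Rightarrow> nat) \<Rightarrow> (nat \<Rightarrow> nat) \<Rightarrow> seqc set" where
  "DFplus X T p q = {x. \<forall>f \<in> dual_FK X T. convergent (\<lambda>n. f (T_mean p q n x))}"

definition DF :: "seqc set \<Rightarrow> seqc topology \<Rightarrow> (nat \<Rightarrow> nat) \<Rightarrow> (nat \<Rightarrow> nat) \<Rightarrow> seqc set" where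
  "DF X T p q = DFplus X T p q \<inter> X"

end

theory Submission
  imports Defs "HOL-Library.Function_Algebras"
begin

(* The inclusions D_p^qS <= D_p^qW <= D_p^qF <= D_p^qF^+ are immediate, so the
   point is D_p^qF^+ <= D_p^qS. For x in D_p^qF^+ the means T_n(x) lie in phi <= X and are
   weakly Cauchy. If they were not Cauchy for the additive uniformity of X, differences along
   two subsequences would form a weakly null sequence staying outside a neighbourhood of 0,
   contradicting the hypothesis that weakly convergent sequences converge. A completely
   metrizable topological group is complete for its additive uniformity, by a Baire category
   argument. Finally coordinates are continuous and T_n(x)_j -> x_j, so the limit is x. *)

locale topological_add_subgroup =
  fixes G :: "'a::ab_group_add set" and T :: "'a topology"
  assumes topspace_eq [simp]: "topspace T = G"
    and zero_mem [simp]: "0 \<in> G"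
    and add_mem: "x \<in> G \<Longrightarrow> y \<in> G \<Longrightarrow> x + y \<in> G"
    and uminus_mem: "x \<in> G \<Longrightarrow> - x \<in> G"
    and continuous_map_add: "continuous_map (prod_topology T T) T (\<lambda>(x, y). x + y)"
begin

lemma diff_mem: "x \<in> G \<Longrightarrow> y \<in> G \<Longrightarrow> x - y \<in> G"
  unfolding diff_conv_add_uminus by (intro add_mem uminus_mem)

lemma continuous_map_translation:
  assumes "c \<in> G"
  shows "continuous_map T T (\<lambda>x. x + c)"
proof -
  have "continuous_map T (prod_topology T T) (\<lambda>x. (x, c))"
    using assms by (intro continuous_map_pairedI) auto
  from continuous_map_compose[OF this continuous_map_add] show ?thesis
    by (simp add: o_def)
qed

lemma openin_translation_preimage:
  assumes "openin T V" "c \<in> G"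
  shows "openin T {x \<in> G. x + c \<in> V}"
  using openin_continuous_map_preimage[OF continuous_map_translation[OF assms(2)] assms(1)]
  by simp

lemma zero_neighbourhood_sum:
  assumes "openin T V" "0 \<in> V"
  obtains U where "openin T U" "0 \<in> U" "\<And>a b. a \<in> U \<Longrightarrow> b \<in> U \<Longrightarrow> a + b \<in> V"
proof -
  let ?P = "{z \<in> topspace (prod_topology T T). (case z of (a, b) \<Rightarrow> a + b) \<in> V}"
  have "openin (prod_topology T T) ?P"
    by (rule openin_continuous_map_preimage[OF continuous_map_add assms(1)])
  moreover have "(0, 0) \<in> ?P"
    using assms(2) by simp
  ultimately obtain A B where "openin T A" "openin T B" "0 \<in> A" "0 \<in> B" "A \<times> B \<subseteq> ?P"
    unfolding openin_prod_topology_alt by meson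
  then show thesis
    by (intro that[of "A \<inter> B"]) auto
qed

definition group_Cauchy :: "(nat \<Rightarrow> 'a) \<Rightarrow> bool" where
  "group_Cauchy s \<longleftrightarrow>
     (\<forall>U. openin T U \<and> 0 \<in> U \<longrightarrow> (\<exists>N. \<forall>n\<ge>N. \<forall>m\<ge>N. s n - s m \<in> U))"

lemma group_Cauchy_if_weakly_Cauchy:
  fixes F :: "('a \<Rightarrow> 'b::topological_group_add) set"
  assumes additive: "\<And>f x y. f \<in> F \<Longrightarrow> x \<in> G \<Longrightarrow> y \<in> G \<Longrightarrow> f (x - y) = f x - f y"
    and weakly_null_imp_null: "\<And>t. range t \<subseteq> G \<Longrightarrow> (\<forall>f\<in>F. (\<lambda>n. f (t n)) \<longlonglongrightarrow> 0) \<Longrightarrow>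
          limitin T t 0 sequentially"
    and s: "range s \<subseteq> G" and weakly_Cauchy: "\<And>f. f \<in> F \<Longrightarrow> convergent (\<lambda>n. f (s n))"
  shows "group_Cauchy s"
  unfolding group_Cauchy_def
proof (intro allI impI, rule ccontr)
  fix U assume U: "openin T U \<and> 0 \<in> U" and "\<nexists>N. \<forall>n\<ge>N. \<forall>m\<ge>N. s n - s m \<in> U"
  then have "\<forall>N. \<exists>n m. N \<le> n \<and> N \<le> m \<and> s n - s m \<notin> U"
    by blast
  then obtain nn mm where nm: "\<And>N. N \<le> nn N" "\<And>N. N \<le> mm N" "\<And>N. s (nn N) - s (mm N) \<notin> U"
    by metis
  define t where "t N = s (nn N) - s (mm N)" for N
  have "(\<lambda>N. f (t N)) \<longlonglongrightarrow> 0" if f: "f \<in> F" for f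
  proof -
    obtain L where L: "(\<lambda>n. f (s n)) \<longlonglongrightarrow> L"
      using weakly_Cauchy[OF f] by (auto simp: convergent_def)
    have "filterlim nn sequentially sequentially" "filterlim mm sequentially sequentially"
      using nm by (auto intro: filterlim_at_top_mono[OF filterlim_ident])
    then have "(\<lambda>N. f (s (nn N)) - f (s (mm N))) \<longlonglongrightarrow> L - L"
      by (intro tendsto_diff filterlim_compose[OF L])
    then show ?thesis
      using additive[OF f] s by (simp add: t_def image_subset_iff)
  qed
  moreover have "range t \<subseteq> G"
    using s diff_mem by (simp add: t_def image_subset_iff)
  ultimately have "limitin T t 0 sequentially"
    by (intro weakly_null_imp_null) auto
  then obtain N where "t N \<in> U"
    using U by (auto simp: limitin_sequentially)
  with nm(3) show False
    by (simp add: t_def)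
qed

lemma Cauchy_translates_near_centre:
  fixes s :: "nat \<Rightarrow> 'a"
  assumes ms: "Metric_space G d" and s: "range s \<subseteq> G" and wG: "w \<in> G"
    and near_w: "\<And>a b. a \<in> V \<Longrightarrow> b \<in> V \<Longrightarrow> d w (a + b + w) < \<epsilon> / 2"
    and N: "\<And>n m. N \<le> n \<Longrightarrow> N \<le> m \<Longrightarrow> s n - s m \<in> V"
  shows "{x \<in> G. x - (w - s N) \<in> V} \<subseteq> {y \<in> G. \<exists>N. \<forall>n\<ge>N. \<forall>m\<ge>N. d (y + s n) (y + s m) < \<epsilon>}"
proof
  interpret Metric_space G d by (rule ms)
  fix x assume x: "x \<in> {x \<in> G. x - (w - s N) \<in> V}"
  have sG: "s n \<in> G" for n
    using s by auto
  have near: "d w (x + s n) < \<epsilon> / 2" if "N \<le> n" for n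
    using near_w[of "x - (w - s N)" "s n - s N"] N[OF that order_refl] x
    by (simp add: algebra_simps)
  have "d (x + s n) (x + s m) < \<epsilon>" if "N \<le> n" "N \<le> m" for n m
  proof -
    have "d (x + s n) (x + s m) \<le> d w (x + s n) + d w (x + s m)"
      using triangle''[of "x + s n" w "x + s m"] x sG wG add_mem by simp
    then show ?thesis
      using near[OF that(1)] near[OF that(2)] by linarith
  qed
  then show "x \<in> {y \<in> G. \<exists>N. \<forall>n\<ge>N. \<forall>m\<ge>N. d (y + s n) (y + s m) < \<epsilon>}"
    using x by blast
qed

(* The metric need not be translation invariant, so a group-Cauchy sequence s need not be
   Cauchy for d; Baire's theorem instead provides a translate y + s that is. *)
lemma dense_interior_of_Cauchy_translates:
  assumes ms: "Metric_space G d" and T: "T = Metric_space.mtopology G d"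
    and s: "range s \<subseteq> G" "group_Cauchy s" and "\<epsilon> > 0"
  shows "T closure_of (T interior_of {y \<in> G. \<exists>N. \<forall>n\<ge>N. \<forall>m\<ge>N. d (y + s n) (y + s m) < \<epsilon>}) = G"
proof -
  interpret Metric_space G d by (rule ms)
  let ?H = "{y \<in> G. \<exists>N. \<forall>n\<ge>N. \<forall>m\<ge>N. d (y + s n) (y + s m) < \<epsilon>}"
  have sG: "s n \<in> G" for n
    using s(1) by auto
  have "T interior_of ?H \<inter> A \<noteq> {}" if A: "openin T A" "A \<noteq> {}" for A
  proof -
    obtain y0 where y0: "y0 \<in> A"
      using A by blast
    have y0G: "y0 \<in> G"
      using openin_subset[OF A(1)] y0 by auto
    obtain N0 where N0: "\<And>n m. N0 \<le> n \<Longrightarrow> N0 \<le> m \<Longrightarrow> s n - s m + y0 \<in> A"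
      using s(2) openin_translation_preimage[OF A(1) y0G] y0 unfolding group_Cauchy_def by force
    define w where "w = y0 + s N0"
    have wG: "w \<in> G"
      using y0G sG add_mem by (simp add: w_def)
    have "openin T (mball w (\<epsilon> / 2))"
      using T by simp
    then have "openin T {x \<in> G. x + w \<in> mball w (\<epsilon> / 2)}"
      by (rule openin_translation_preimage[OF _ wG])
    moreover have "0 \<in> {x \<in> G. x + w \<in> mball w (\<epsilon> / 2)}"
      using wG \<open>\<epsilon> > 0\<close> by simp
    ultimately obtain V where V: "openin T V" "0 \<in> V"
      and near_w: "\<And>a b. a \<in> V \<Longrightarrow> b \<in> V \<Longrightarrow> d w (a + b + w) < \<epsilon> / 2"
      by (rule zero_neighbourhood_sum) auto
    obtain N1 where "\<forall>n\<ge>N1. \<forall>m\<ge>N1. s n - s m \<in> V"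
      using s(2) V unfolding group_Cauchy_def by blast
    then obtain N where N: "\<And>n m. N \<le> n \<Longrightarrow> N \<le> m \<Longrightarrow> s n - s m \<in> V" and "N0 \<le> N"
      by (metis le_trans max.cobounded1 max.cobounded2)
    define y where "y = w - s N"
    have "y \<in> A"
      using N0[OF order_refl \<open>N0 \<le> N\<close>] by (simp add: y_def w_def algebra_simps)
    have yG: "y \<in> G"
      using wG sG diff_mem by (simp add: y_def)
    let ?W = "{x \<in> G. x - y \<in> V} \<inter> A"
    have "openin T {x \<in> G. x - y \<in> V}"
      using openin_translation_preimage[OF V(1) uminus_mem[OF yG]] by simp
    then have "openin T ?W"
      using A(1) by blast
    moreover have "y \<in> ?W"
      using yG V(2) \<open>y \<in> A\<close> by simp
    moreover have "?W \<subseteq> ?H"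
      using Cauchy_translates_near_centre[where N = N, OF ms s(1) wG near_w N]
      unfolding y_def by blast
    ultimately show ?thesis
      using interior_of_maximal[of ?W ?H T] by blast
  qed
  then show ?thesis
    unfolding topspace_eq[symmetric] dense_intersects_open by blast
qed

lemma group_Cauchy_convergent:
  assumes "completely_metrizable_space T" "range s \<subseteq> G" "group_Cauchy s"
  obtains z where "z \<in> G" "limitin T s z sequentially"
proof -
  obtain M d where M: "Metric_space M d" "Metric_space.mcomplete M d"
    and T_M: "T = Metric_space.mtopology M d"
    using assms(1) unfolding completely_metrizable_space_def by blast
  have "M = G"
    using Metric_space.topspace_mtopology[OF M(1)] T_M topspace_eq by metis
  then have ms: "Metric_space G d" and complete: "Metric_space.mcomplete G d"
    and T: "T = Metric_space.mtopology G d"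
    using M T_M by simp_all
  interpret Metric_space G d by (rule ms)
  define H where "H k = {y \<in> G. \<exists>N. \<forall>n\<ge>N. \<forall>m\<ge>N. d (y + s n) (y + s m) < 1 / Suc k}" for k
  have "T closure_of \<Inter>(range (\<lambda>k. T interior_of H k)) = topspace T"
  proof (rule Baire_category)
    fix U assume "U \<in> range (\<lambda>k. T interior_of H k)"
    then show "openin T U \<and> T closure_of U = topspace T"
      using dense_interior_of_Cauchy_translates[OF ms T assms(2,3)] by (auto simp: H_def)
  qed (simp_all add: assms(1))
  then have "\<Inter>(range (\<lambda>k. T interior_of H k)) \<noteq> {}"
    using zero_mem by force
  then obtain y where y: "\<And>k. y \<in> T interior_of H k"
    by blast
  have yH: "y \<in> H k" for k
    using y[of k] interior_of_subset[of T "H k"] by blast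
  then have "y \<in> G"
    by (simp add: H_def)
  have "MCauchy (\<lambda>n. y + s n)"
    unfolding MCauchy_def
  proof (intro conjI allI impI)
    show "range (\<lambda>n. y + s n) \<subseteq> G"
      using \<open>y \<in> G\<close> assms(2) add_mem by auto
    fix e :: real assume "e > 0"
    then obtain k where "inverse (Suc k) < e"
      using reals_Archimedean by blast
    moreover obtain N where "\<forall>n\<ge>N. \<forall>m\<ge>N. d (y + s n) (y + s m) < 1 / Suc k"
      using yH[of k] unfolding H_def by blast
    ultimately show "\<exists>N. \<forall>n n'. N \<le> n \<longrightarrow> N \<le> n' \<longrightarrow> d (y + s n) (y + s n') < e"
      by (metis inverse_eq_divide less_trans)
  qed
  then obtain z where z: "limitin T (\<lambda>n. y + s n) z sequentially"
    using complete T by (auto simp: mcomplete_def)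
  have "limitin T s (z - y) sequentially"
    using continuous_map_limit[OF continuous_map_translation[OF uminus_mem[OF \<open>y \<in> G\<close>]] z]
    by (simp add: o_def)
  moreover have "z - y \<in> G"
    using limitin_topspace[OF z] \<open>y \<in> G\<close> diff_mem by simp
  ultimately show thesis
    using that by blast
qed

end

lemma FK_space_topological_add_subgroup:
  assumes "FK_space X T"
  shows "topological_add_subgroup X T"
proof
  have X: "linear_subspace_w X"
    using assms by (simp add: FK_space_def)
  show "topspace T = X"
    using assms by (simp add: FK_space_def)
  show "0 \<in> X"
    using X by (simp add: linear_subspace_w_def zero_fun_def)
  show "x + y \<in> X" if "x \<in> X" "y \<in> X" for x y
    using X that by (simp add: linear_subspace_w_def plus_fun_def)
  show "- x \<in> X" if "x \<in> X" for x
  proof -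
    have "(\<lambda>j. (- 1) * x j) \<in> X"
      using X that unfolding linear_subspace_w_def by blast
    then show ?thesis
      by (simp add: fun_Compl_def)
  qed
  show "continuous_map (prod_topology T T) T (\<lambda>(x, y). x + y)"
    using assms by (simp add: FK_space_def plus_fun_def)
qed

lemma dual_FK_diff:
  assumes "f \<in> dual_FK X T" "x \<in> X" "y \<in> X"
  shows "f (x - y) = f x - f y"
proof -
  have "f (\<lambda>j. 1 * x j + (- 1) * y j) = 1 * f x + (- 1) * f y"
    using assms by (simp only: dual_FK_def mem_Collect_eq)
  then show ?thesis
    by (simp add: fun_diff_def)
qed

lemma dual_FK_tendsto_if_limitin:
  assumes "f \<in> dual_FK X T" "limitin T s x sequentially"
  shows "(\<lambda>n. f (s n)) \<longlonglongrightarrow> f x"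
  using continuous_map_limit[OF _ assms(2), of euclidean f] assms(1)
  by (simp add: dual_FK_def o_def)

lemma FK_space_limitin_eq_coordinatewise_limit:
  assumes "FK_space X T" "limitin T s z sequentially" "\<And>j. (\<lambda>n. s n j) \<longlonglongrightarrow> x j"
  shows "z = x"
proof
  fix j
  have "continuous_map T euclidean (\<lambda>x. x j)"
    using assms(1) by (simp add: FK_space_def)
  from continuous_map_limit[OF this assms(2)] have "(\<lambda>n. s n j) \<longlonglongrightarrow> z j"
    by (simp add: o_def)
  then show "z j = x j"
    using assms(3) by (rule LIMSEQ_unique)
qed

lemma T_mean_in_phi_space: "T_mean p q n x \<in> phi_space"
proof -
  have "T_mean p q n x j = 0" if "q n \<le> j" for j
    using that by (auto simp: T_mean_def section_k_def intro!: sum.neutral)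
  then have "{j. T_mean p q n x j \<noteq> 0} \<subseteq> {..<q n}"
    by (auto simp: not_less[symmetric])
  then show ?thesis
    unfolding phi_space_def by (auto intro: finite_subset)
qed

lemma T_mean_apply:
  "T_mean p q n x j = of_real (real (q n - max (p n) j) / real (q n - p n)) * x j"
proof -
  have "{k \<in> {p n<..q n}. j < k} = {max (p n) j<..q n}"
    by auto
  then have "(\<Sum>k\<in>{p n<..q n}. section_k k x j) = of_nat (q n - max (p n) j) * x j"
    unfolding section_k_def by (simp add: sum.inter_filter[symmetric])
  then show ?thesis
    by (simp add: T_mean_def)
qed

lemma T_mean_tendsto_coordinate:
  assumes "\<And>n. p n < q n" "filterlim q at_top sequentially"
  shows "(\<lambda>n. T_mean p q n x j) \<longlonglongrightarrow> x j"
proof -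
  define r where "r n = real (q n - max (p n) j) / real (q n - p n)" for n
  have "eventually (\<lambda>n. j \<le> q n) sequentially"
    using assms(2) by (simp add: filterlim_at_top)
  then have "eventually (\<lambda>n. 1 - real j / real (q n) \<le> r n \<and> r n \<le> 1) sequentially"
  proof eventually_elim
    case (elim n)
    show ?case
    proof (cases "p n < j")
      case True
      have "1 - real j / real (q n) = real (q n - j) / real (q n)"
        using elim assms(1)[of n] by (simp add: of_nat_diff field_simps)
      also have "\<dots> \<le> r n"
        using True elim assms(1)[of n] unfolding r_def by (intro frac_le) auto
      finally show ?thesis
        using assms(1)[of n] by (simp add: r_def)
    qed (use assms(1)[of n] in \<open>simp add: r_def\<close>)
  qed
  moreover have "(\<lambda>n. real j / real (q n)) \<longlonglongrightarrow> 0"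
    by (rule tendsto_divide_0[OF tendsto_const filterlim_at_top_imp_at_infinity
          [OF filterlim_compose[OF filterlim_real_sequentially assms(2)]]])
  then have "(\<lambda>n. 1 - real j / real (q n)) \<longlonglongrightarrow> 1"
    using tendsto_diff[OF tendsto_const, of _ 0 sequentially 1] by simp
  ultimately have "r \<longlonglongrightarrow> 1"
    using tendsto_sandwich[of "\<lambda>n. 1 - real j / real (q n)" r sequentially "\<lambda>_. 1" 1]
    unfolding eventually_conj_iff by simp
  then have "(\<lambda>n. of_real (r n) * x j) \<longlonglongrightarrow> of_real 1 * x j"
    by (intro tendsto_intros)
  then show ?thesis
    by (simp add: T_mean_apply r_def)
qed

lemma DFplus_subset_DS:
  assumes FK: "FK_space X T" and "phi_space \<subseteq> X"
    and "\<And>n. p n < q n" and "filterlim q at_top sequentially"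
    and weakly_null_imp_null: "\<And>t. range t \<subseteq> X \<Longrightarrow>
          (\<forall>f\<in>dual_FK X T. (\<lambda>n. f (t n)) \<longlonglongrightarrow> 0) \<Longrightarrow> limitin T t 0 sequentially"
  shows "DFplus X T p q \<subseteq> DS X T p q"
proof
  interpret topological_add_subgroup X T
    using FK by (rule FK_space_topological_add_subgroup)
  fix x assume x: "x \<in> DFplus X T p q"
  have means: "range (\<lambda>n. T_mean p q n x) \<subseteq> X"
    using T_mean_in_phi_space assms(2) by blast
  have "group_Cauchy (\<lambda>n. T_mean p q n x)"
    by (rule group_Cauchy_if_weakly_Cauchy[OF dual_FK_diff weakly_null_imp_null means])
      (use x in \<open>auto simp: DFplus_def\<close>)
  moreover have "completely_metrizable_space T"
    using FK by (simp add: FK_space_def)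
  ultimately obtain z where "limitin T (\<lambda>n. T_mean p q n x) z sequentially"
    using group_Cauchy_convergent means by blast
  moreover have "z = x"
    using FK_space_limitin_eq_coordinatewise_limit[OF FK calculation]
      T_mean_tendsto_coordinate[OF assms(3,4)] by blast
  ultimately show "x \<in> DS X T p q"
    using limitin_topspace by (fastforce simp: DS_def)
qed

theorem mainTheorem19:
  fixes X :: "(nat \<Rightarrow> complex) set" and T :: "(nat \<Rightarrow> complex) topology"
    and p q :: "nat \<Rightarrow> nat"
  assumes "FK_space X T"
    and "phi_space \<subseteq> X"
    and "\<And>n. p n < q n"
    and "filterlim q at_top sequentially"
    and "\<And>s x. (\<forall>n. s n \<in> X) \<Longrightarrow> x \<in> X \<Longrightarrow>
            (\<forall>f \<in> dual_FK X T. (\<lambda>n. f (s n)) \<longlonglongrightarrow> f x) \<Longrightarrow>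
            limitin T s x sequentially"
  shows "DS X T p q = DW X T p q \<and> DW X T p q = DF X T p q \<and> DF X T p q = DFplus X T p q"
proof -
  have "0 \<in> X"
    using topological_add_subgroup.zero_mem[OF FK_space_topological_add_subgroup[OF assms(1)]] .
  have "limitin T t 0 sequentially"
    if t: "range t \<subseteq> X" and null: "\<forall>f\<in>dual_FK X T. (\<lambda>n. f (t n)) \<longlonglongrightarrow> 0" for t
  proof -
    have "(\<lambda>n. f (t n)) \<longlonglongrightarrow> f 0" if "f \<in> dual_FK X T" for f
      using null that dual_FK_diff[OF that \<open>0 \<in> X\<close> \<open>0 \<in> X\<close>] by simp
    with t show ?thesis
      using assms(5) \<open>0 \<in> X\<close> by blast
  qed
  then have "DFplus X T p q \<subseteq> DS X T p q"
    by (rule DFplus_subset_DS[OF assms(1-4)])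
  moreover have "DS X T p q \<subseteq> DW X T p q"
    by (auto simp: DS_def DW_def intro: dual_FK_tendsto_if_limitin)
  moreover have "DW X T p q \<subseteq> DF X T p q"
    by (auto simp: DW_def DF_def DFplus_def convergent_def)
  ultimately show ?thesis
    by (auto simp: DF_def)
qed

end
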